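(* Assume the setting below, with $f$ twice continuously differentiable and $\mathbf{H}(\mathbf{x})=d^2f(\mathbf{x})$ positive definite for every $\mathbf{x}$. Let $I\subset(0,\infty)$ be an open interval such that for every $\rho\in I$ the function $\mathcal{E}_\rho$ has a (necessarily unique) minimizer $\mathbf{x}(\rho)$, the map $\rho\mapsto\mathbf{x}(\rho)$ is continuous on $I$, the index sets $\mathcal{N}_E,\mathcal{Z}_E,\mathcal{P}_E,\mathcal{N}_I,\mathcal{Z}_I,\mathcal{P}_I$ computed at $\mathbf{x}(\rho)$ do not depend on $\rho\in I$, and the rows of $\mathbf{U}_{\mathcal{Z}}$ are linearly independent. Then $\rho\mapsto\mathbf{x}(\rho)$ is differentiable on $I$ and satisfies the ordinary differential equation $$\frac{d\mathbf{x}(\rho)}{d\rho}=-\mathbf{P}(\mathbf{x}(\rho))\,\mathbf{u}_{\bar{\mathcal{Z}}}.$$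
   Context: Setting: $f:\mathbb{R}^p\to\mathbb{R}$ convex and twice continuously differentiable; vectors $\mathbf{v}_1,\dots,\mathbf{v}_r,\mathbf{w}_1,\dots,\mathbf{w}_s\in\mathbb{R}^p$ and scalars $d_1,\dots,d_r,e_1,\dots,e_s$; $g_i(\mathbf{x})=\mathbf{v}_i^t\mathbf{x}-d_i$, $h_j(\mathbf{x})=\mathbf{w}_j^t\mathbf{x}-e_j$; $\mathcal{E}_\rho(\mathbf{x})=f(\mathbf{x})+\rho\sum_i|g_i(\mathbf{x})|+\rho\sum_j\max\{0,h_j(\mathbf{x})\}$ (equivalently $f(\mathbf{x})+\rho\|\mathbf{V}\mathbf{x}-\mathbf{d}\|_1+\rho\|\mathbf{W}\mathbf{x}-\mathbf{e}\|_+$, where $\|\mathbf{v}\|_+=\sum_i\max\{v_i,0\}$). Index sets at $\mathbf{x}$: $\mathcal{N}_E=\{i:g_i(\mathbf{x})<0\}$, $\mathcal{Z}_E=\{i:g_i(\mathbf{x})=0\}$, $\mathcal{P}_E=\{i:g_i(\mathbf{x})>0\}$, $\mathcal{N}_I=\{j:h_j(\mathbf{x})<0\}$, $\mathcal{Z}_I=\{j:h_j(\mathbf{x})=0\}$, $\mathcal{P}_I=\{j:h_j(\mathbf{x})>0\}$. $\mathbf{U}_{\mathcal{Z}}$ is the matrix whose rows are $\mathbf{v}_i^t$, $i\in\mathcal{Z}_E$, and $\mathbf{w}_j^t$, $j\in\mathcal{Z}_I$. $\mathbf{u}_{\bar{\mathcal{Z}}}=-\sum_{i\in\mathcal{N}_E}\mathbf{v}_i+\sum_{i\in\mathcal{P}_E}\mathbf{v}_i+\sum_{j\in\mathcal{P}_I}\mathbf{w}_j$.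 With $\mathbf{H}=\mathbf{H}(\mathbf{x})=d^2f(\mathbf{x})$ invertible and $\mathbf{U}_{\mathcal{Z}}$ of full row rank: $\mathbf{P}(\mathbf{x})=\mathbf{H}^{-1}-\mathbf{H}^{-1}\mathbf{U}_{\mathcal{Z}}^t[\mathbf{U}_{\mathcal{Z}}\mathbf{H}^{-1}\mathbf{U}_{\mathcal{Z}}^t]^{-1}\mathbf{U}_{\mathcal{Z}}\mathbf{H}^{-1}$, $\mathbf{Q}(\mathbf{x})=\mathbf{H}^{-1}\mathbf{U}_{\mathcal{Z}}^t[\mathbf{U}_{\mathcal{Z}}\mathbf{H}^{-1}\mathbf{U}_{\mathcal{Z}}^t]^{-1}$, $\mathbf{R}(\mathbf{x})=-[\mathbf{U}_{\mathcal{Z}}\mathbf{H}^{-1}\mathbf{U}_{\mathcal{Z}}^t]^{-1}$ (these are the blocks of the inverse of $\begin{pmatrix}\mathbf{H}&\mathbf{U}_{\mathcal{Z}}^t\\\mathbf{U}_{\mathcal{Z}}&\mathbf{0}\end{pmatrix}$). *)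

theory Defs
  imports "HOL-Analysis.Analysis"
begin

text \<open>Constraint data: equality constraints g_i(x) = v_i . x - d_i for i < r,
  inequality constraints h_j(x) = w_j . x - e_j for j < s.\<close>

definition penE :: "('a::real_inner \<Rightarrow> real) \<Rightarrow> (nat \<Rightarrow> 'a) \<Rightarrow> (nat \<Rightarrow> real) \<Rightarrow> nat
    \<Rightarrow> (nat \<Rightarrow> 'a) \<Rightarrow> (nat \<Rightarrow> real) \<Rightarrow> nat \<Rightarrow> real \<Rightarrow> 'a \<Rightarrow> real" where
  "penE f v d r w e s \<rho> x =
     f x + \<rho> * (\<Sum>i<r. \<bar>v i \<bullet> x - d i\<bar>) + \<rho> * (\<Sum>j<s. max 0 (w j \<bullet> x - e j))"

definition NE :: "(nat \<Rightarrow> 'a::real_inner) \<Rightarrow> (nat \<Rightarrow> real) \<Rightarrow> nat \<Rightarrow> 'a \<Rightarrow> nat set" where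
  "NE v d r x = {i. i < r \<and> v i \<bullet> x - d i < 0}"
definition ZE :: "(nat \<Rightarrow> 'a::real_inner) \<Rightarrow> (nat \<Rightarrow> real) \<Rightarrow> nat \<Rightarrow> 'a \<Rightarrow> nat set" where
  "ZE v d r x = {i. i < r \<and> v i \<bullet> x - d i = 0}"
definition PE :: "(nat \<Rightarrow> 'a::real_inner) \<Rightarrow> (nat \<Rightarrow> real) \<Rightarrow> nat \<Rightarrow> 'a \<Rightarrow> nat set" where
  "PE v d r x = {i. i < r \<and> v i \<bullet> x - d i > 0}"
definition NI :: "(nat \<Rightarrow> 'a::real_inner) \<Rightarrow> (nat \<Rightarrow> real) \<Rightarrow> nat \<Rightarrow> 'a \<Rightarrow> nat set" where
  "NI w e s x = {j. j < s \<and> w j \<bullet> x - e j < 0}"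
definition ZI :: "(nat \<Rightarrow> 'a::real_inner) \<Rightarrow> (nat \<Rightarrow> real) \<Rightarrow> nat \<Rightarrow> 'a \<Rightarrow> nat set" where
  "ZI w e s x = {j. j < s \<and> w j \<bullet> x - e j = 0}"
definition PI :: "(nat \<Rightarrow> 'a::real_inner) \<Rightarrow> (nat \<Rightarrow> real) \<Rightarrow> nat \<Rightarrow> 'a \<Rightarrow> nat set" where
  "PI w e s x = {j. j < s \<and> w j \<bullet> x - e j > 0}"

text \<open>Rows of U_Z are indexed by the set Z = Inl ` Z_E \<union> Inr ` Z_I; row (Inl i) = v_i, row (Inr j) = w_j.\<close>

definition Zrow :: "(nat \<Rightarrow> 'a) \<Rightarrow> (nat \<Rightarrow> 'a) \<Rightarrow> nat + nat \<Rightarrow> 'a" where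
  "Zrow v w = case_sum v w"

definition Zset :: "(nat \<Rightarrow> 'a::real_inner) \<Rightarrow> (nat \<Rightarrow> real) \<Rightarrow> nat
    \<Rightarrow> (nat \<Rightarrow> 'a) \<Rightarrow> (nat \<Rightarrow> real) \<Rightarrow> nat \<Rightarrow> 'a \<Rightarrow> (nat + nat) set" where
  "Zset v d r w e s x = Inl ` ZE v d r x \<union> Inr ` ZI w e s x"

definition ubar :: "(nat \<Rightarrow> 'a::real_inner) \<Rightarrow> (nat \<Rightarrow> real) \<Rightarrow> nat
    \<Rightarrow> (nat \<Rightarrow> 'a) \<Rightarrow> (nat \<Rightarrow> real) \<Rightarrow> nat \<Rightarrow> 'a \<Rightarrow> 'a" where
  "ubar v d r w e s x = - (\<Sum>i\<in>NE v d r x. v i) + (\<Sum>i\<in>PE v d r x. v i) + (\<Sum>j\<in>PI w e s x. w j)"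

definition rows_indep :: "(nat + nat \<Rightarrow> 'a::real_vector) \<Rightarrow> (nat + nat) set \<Rightarrow> bool" where
  "rows_indep rw Z \<longleftrightarrow> (\<forall>c. (\<Sum>a\<in>Z. c a *\<^sub>R rw a) = 0 \<longrightarrow> (\<forall>a\<in>Z. c a = 0))"

definition set_mat_inv :: "'k set \<Rightarrow> ('k \<Rightarrow> 'k \<Rightarrow> real) \<Rightarrow> ('k \<Rightarrow> 'k \<Rightarrow> real)" where
  "set_mat_inv S M = (THE M'. (\<forall>a\<in>S. \<forall>b\<in>S. (\<Sum>c\<in>S. M a c * M' c b) = (if a = b then 1 else 0))
                           \<and> (\<forall>a b. a \<notin> S \<or> b \<notin> S \<longrightarrow> M' a b = 0))"

text \<open>P = H^-1 - H^-1 U_Z^t [U_Z H^-1 U_Z^t]^-1 U_Z H^-1, written out entrywise.\<close>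
definition Pmat :: "real^'n^'n \<Rightarrow> (nat + nat \<Rightarrow> real^'n) \<Rightarrow> (nat + nat) set \<Rightarrow> real^'n^'n" where
  "Pmat H rw Z =
    (let Hi = matrix_inv H;
         K = (\<lambda>a b. rw a \<bullet> (Hi *v rw b));
         Ki = set_mat_inv Z K
     in Hi - (\<chi> i j. \<Sum>a\<in>Z. \<Sum>b\<in>Z. (Hi *v rw a) $ i * Ki a b * (rw b v* Hi) $ j))"

end

theory Submission
  imports Defs
begin

(*
  Fix rho in I and write x = x(rho), Z for the (constant) set of active rows,
  N = {z. U_Z z = 0} for their kernel, u = ubar and q = -P(x) u.

  1. Stationarity.  Along any direction z in N every penalty term is
     differentiable at x, so minimality of x(t) gives
     (grad f(x(t)) + t u) . z = 0 for all z in N and all t in I.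
  2. Linear algebra.  Independence of the rows makes the Gram matrix
     U_Z H^-1 U_Z^t invertible; hence q lies in N and H q + u is orthogonal to N.
  3. Deviation bound.  Since the active sets are constant, x(t) - x lies in N.
     Subtracting the stationarity relations at t and rho and using step 2 shows
     that zz = x(t) - x - (t - rho) q satisfies zz . H zz = - zz . R(t), where R
     is the Taylor remainder of grad f at x; coercivity of H then gives
     c |zz| <= |R(t)|.
  4. Since R(t) = o(|x(t) - x|) and x(.) is continuous, this bound forces
     zz = o(|t - rho|), i.e. x'(rho) = q.
*)

section \<open>Stationarity of the exact penalty function\<close>

definition row_kernel :: "('k \<Rightarrow> 'a::real_inner) \<Rightarrow> 'k set \<Rightarrow> 'a set" where
  "row_kernel rw Z = {z. \<forall>a\<in>Z. rw a \<bullet> z = 0}"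

lemma subspace_row_kernel: "subspace (row_kernel rw Z)"
  by (auto simp: row_kernel_def subspace_def inner_add_right)

lemma row_kernel_active_iff:
  "z \<in> row_kernel (Zrow v w) (Zset v d r w e s x) \<longleftrightarrow>
     (\<forall>i<r. v i \<bullet> x - d i = 0 \<longrightarrow> v i \<bullet> z = 0) \<and> (\<forall>j<s. w j \<bullet> x - e j = 0 \<longrightarrow> w j \<bullet> z = 0)"
  by (auto simp: row_kernel_def Zset_def ZE_def ZI_def Zrow_def ball_Un)

lemma diff_in_row_kernel:
  assumes "ZE v d r y = ZE v d r x" and "ZI w e s y = ZI w e s x"
  shows "y - x \<in> row_kernel (Zrow v w) (Zset v d r w e s x)"
proof -
  have "v i \<bullet> y = d i" if "i \<in> ZE v d r x" for i
    using that assms(1) by (auto simp: ZE_def)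
  moreover have "w j \<bullet> y = e j" if "j \<in> ZI w e s x" for j
    using that assms(2) by (auto simp: ZI_def)
  ultimately show ?thesis
    by (auto simp: row_kernel_def Zset_def Zrow_def ZE_def ZI_def inner_diff_right)
qed

lemma eventually_affine_pos:
  fixes a b :: real assumes "a > 0"
  shows "eventually (\<lambda>t. a + t * b > 0) (nhds 0)"
proof -
  have "open {t::real. 0 < a + t * b}"
    by (intro open_Collect_less continuous_intros)
  then show ?thesis
    using assms unfolding eventually_nhds by (intro exI[of _ "{t. 0 < a + t * b}"]) auto
qed

text \<open>The penalty terms are differentiable along directions that do not leave the
  kink: if a = 0 then also b = 0.\<close>

lemma abs_affine_has_derivative:
  fixes a b :: real assumes "a = 0 \<Longrightarrow> b = 0"
  shows "((\<lambda>t. \<bar>a + t * b\<bar>) has_real_derivative (sgn a * b)) (at 0)"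
proof -
  have lin: "((\<lambda>t. a + t * b) has_real_derivative b) (at 0)"
    by (auto intro!: derivative_eq_intros)
  consider "a > 0" | "a < 0" | "a = 0" by linarith
  then show ?thesis
  proof cases
    case 1
    have "eventually (\<lambda>t. \<bar>a + t * b\<bar> = a + t * b) (nhds 0)"
      using eventually_affine_pos[OF 1, of b] by (auto elim: eventually_mono)
    then show ?thesis using lin 1 by (subst DERIV_cong_ev[OF refl _ refl]) auto
  next
    case 2
    have "eventually (\<lambda>t. \<bar>a + t * b\<bar> = - (a + t * b)) (nhds 0)"
      using eventually_affine_pos[of "-a" "-b"] 2 by (auto elim: eventually_mono)
    then show ?thesis using DERIV_minus[OF lin] 2 by (subst DERIV_cong_ev[OF refl _ refl]) auto
  qed (use assms in simp)
qed

lemma pos_part_affine_has_derivative: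
  fixes a b :: real assumes "a = 0 \<Longrightarrow> b = 0"
  shows "((\<lambda>t. max 0 (a + t * b)) has_real_derivative (if a > 0 then b else 0)) (at 0)"
proof -
  have lin: "((\<lambda>t. a + t * b) has_real_derivative b) (at 0)"
    by (auto intro!: derivative_eq_intros)
  consider "a > 0" | "a < 0" | "a = 0" by linarith
  then show ?thesis
  proof cases
    case 1
    have "eventually (\<lambda>t. max 0 (a + t * b) = a + t * b) (nhds 0)"
      using eventually_affine_pos[OF 1, of b] by (auto elim: eventually_mono)
    then show ?thesis using lin 1 by (subst DERIV_cong_ev[OF refl _ refl]) auto
  next
    case 2
    have "eventually (\<lambda>t. max 0 (a + t * b) = 0) (nhds 0)"
      using eventually_affine_pos[of "-a" "-b"] 2 by (auto elim: eventually_mono)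
    then show ?thesis using 2 by (subst DERIV_cong_ev[OF refl _ refl]) auto
  qed (use assms in simp)
qed

lemma sum_sgn_mult_split:
  fixes a b :: "nat \<Rightarrow> real"
  shows "(\<Sum>i<r. sgn (a i) * b i) = (\<Sum>i\<in>{i. i < r \<and> a i > 0}. b i) - (\<Sum>i\<in>{i. i < r \<and> a i < 0}. b i)"
proof -
  have e1: "{i. i < r \<and> a i > 0} = {i\<in>{..<r}. a i > 0}"
    and e2: "{i. i < r \<and> a i < 0} = {i\<in>{..<r}. a i < 0}" by auto
  show ?thesis
    unfolding e1 e2 sum.inter_filter[OF finite_lessThan] sum_subtractf[symmetric]
    by (rule sum.cong) (auto simp: sgn_if)
qed

lemma sum_pos_indicator:
  fixes a b :: "nat \<Rightarrow> real"
  shows "(\<Sum>i<r. if a i > 0 then b i else 0) = (\<Sum>i\<in>{i. i < r \<and> a i > 0}. b i)"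
proof -
  have e: "{i. i < r \<and> a i > 0} = {i\<in>{..<r}. a i > 0}" by auto
  show ?thesis unfolding e sum.inter_filter[OF finite_lessThan] ..
qed

text \<open>The vector ubar collects the one-sided derivatives of the nonsmooth penalty
  terms.\<close>

lemma inner_ubar:
  "ubar v d r w e s x \<bullet> z = (\<Sum>i<r. sgn (v i \<bullet> x - d i) * (v i \<bullet> z))
                          + (\<Sum>j<s. if w j \<bullet> x - e j > 0 then w j \<bullet> z else 0)"
  unfolding ubar_def NE_def PE_def PI_def sum_sgn_mult_split[of "\<lambda>i. v i \<bullet> x - d i"]
    sum_pos_indicator[of "\<lambda>j. w j \<bullet> x - e j"]
  by (simp add: inner_add_left inner_diff_left inner_sum_left)

lemma penalty_stationarity:
  fixes f :: "'a::real_inner \<Rightarrow> real"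
  assumes grad: "(f has_derivative (\<lambda>h. g \<bullet> h)) (at x)"
    and min: "\<forall>y. penE f v d r w e s \<rho> x \<le> penE f v d r w e s \<rho> y"
    and tangent: "z \<in> row_kernel (Zrow v w) (Zset v d r w e s x)"
  shows "(g + \<rho> *\<^sub>R ubar v d r w e s x) \<bullet> z = 0"
proof -
  have zE: "\<forall>i<r. v i \<bullet> x - d i = 0 \<longrightarrow> v i \<bullet> z = 0"
    and zI: "\<forall>j<s. w j \<bullet> x - e j = 0 \<longrightarrow> w j \<bullet> z = 0"
    using tangent by (simp_all add: row_kernel_active_iff)
  have "((\<lambda>t. x + t *\<^sub>R z) has_derivative (\<lambda>t. t *\<^sub>R z)) (at 0)"
    by (auto intro!: derivative_eq_intros)
  moreover have "(f has_derivative (\<lambda>h. g \<bullet> h)) (at (x + 0 *\<^sub>R z))"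
    using grad by simp
  ultimately have "((\<lambda>t. f (x + t *\<^sub>R z)) has_derivative (\<lambda>t. g \<bullet> (t *\<^sub>R z))) (at 0)"
    by (rule has_derivative_compose)
  moreover have "(\<lambda>t. g \<bullet> (t *\<^sub>R z)) = (*) (g \<bullet> z)"
    by (simp add: fun_eq_iff)
  ultimately have df: "((\<lambda>t. f (x + t *\<^sub>R z)) has_real_derivative (g \<bullet> z)) (at 0)"
    by (simp add: has_field_derivative_def)
  have dE: "((\<lambda>t. \<bar>v i \<bullet> (x + t *\<^sub>R z) - d i\<bar>) has_real_derivative
       sgn (v i \<bullet> x - d i) * (v i \<bullet> z)) (at 0)" if "i \<in> {..<r}" for i
  proof -
    have "(\<lambda>t. \<bar>v i \<bullet> (x + t *\<^sub>R z) - d i\<bar>) = (\<lambda>t. \<bar>(v i \<bullet> x - d i) + t * (v i \<bullet> z)\<bar>)"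
      by (simp add: algebra_simps)
    then show ?thesis using abs_affine_has_derivative[of "v i \<bullet> x - d i" "v i \<bullet> z"] zE that by simp
  qed
  have dI: "((\<lambda>t. max 0 (w j \<bullet> (x + t *\<^sub>R z) - e j)) has_real_derivative
       (if w j \<bullet> x - e j > 0 then w j \<bullet> z else 0)) (at 0)" if "j \<in> {..<s}" for j
  proof -
    have "(\<lambda>t. max 0 (w j \<bullet> (x + t *\<^sub>R z) - e j)) = (\<lambda>t. max 0 ((w j \<bullet> x - e j) + t * (w j \<bullet> z)))"
      by (simp add: algebra_simps)
    then show ?thesis using pos_part_affine_has_derivative[of "w j \<bullet> x - e j" "w j \<bullet> z"] zI that by simp
  qed
  let ?D = "g \<bullet> z + \<rho> * (\<Sum>i<r. sgn (v i \<bullet> x - d i) * (v i \<bullet> z))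
     + \<rho> * (\<Sum>j<s. if w j \<bullet> x - e j > 0 then w j \<bullet> z else 0)"
  have "((\<lambda>t. penE f v d r w e s \<rho> (x + t *\<^sub>R z)) has_real_derivative ?D) (at 0)"
    unfolding penE_def by (intro DERIV_add DERIV_cmult DERIV_sum df dE dI)
  moreover have "?D = (g + \<rho> *\<^sub>R ubar v d r w e s x) \<bullet> z"
    by (simp add: inner_add_left inner_ubar algebra_simps)
  ultimately have "((\<lambda>t. penE f v d r w e s \<rho> (x + t *\<^sub>R z)) has_real_derivative
      ((g + \<rho> *\<^sub>R ubar v d r w e s x) \<bullet> z)) (at 0)"
    by simp
  then show ?thesis
    by (rule DERIV_local_min[OF _ zero_less_one]) (use min in simp)
qed

section \<open>Linear algebra of the active rows\<close>

definition pos_def :: "real^'n^'n \<Rightarrow> bool" where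
  "pos_def G \<longleftrightarrow> (\<forall>h. h \<noteq> 0 \<longrightarrow> 0 < h \<bullet> (G *v h))"

definition gram :: "real^'n^'n \<Rightarrow> ('k \<Rightarrow> real^'n) \<Rightarrow> 'k \<Rightarrow> 'k \<Rightarrow> real" where
  "gram G rw a b = rw a \<bullet> (G *v rw b)"

lemma rows_indepD: "rows_indep rw Z \<Longrightarrow> (\<Sum>a\<in>Z. c a *\<^sub>R rw a) = 0 \<Longrightarrow> a \<in> Z \<Longrightarrow> c a = 0"
  by (simp add: rows_indep_def)

lemma rows_indep_inj:
  assumes ind: "rows_indep rw Z" and fin: "finite Z"
  shows "inj_on rw Z"
proof (rule inj_onI, rule ccontr)
  fix a b assume ab: "a \<in> Z" "b \<in> Z" "rw a = rw b" "a \<noteq> b"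
  let ?c = "\<lambda>x. (if x = a then 1 else 0) + (if x = b then -1 else (0::real))"
  have "(\<Sum>x\<in>Z. ?c x *\<^sub>R rw x)
      = (\<Sum>x\<in>Z. (if x = a then rw a else 0)) + (\<Sum>x\<in>Z. (if x = b then - rw b else 0))"
    unfolding sum.distrib[symmetric] by (rule sum.cong) (auto simp: scaleR_add_left)
  also have "\<dots> = 0" using ab fin by (simp add: sum.delta)
  finally have "?c a = 0" using rows_indepD[OF ind _ ab(1), of ?c] by blast
  then show False using ab by simp
qed

lemma span_rows:
  assumes ind: "rows_indep rw Z" and fin: "finite Z" and y: "y \<in> span (rw ` Z)"
  obtains c where "y = (\<Sum>a\<in>Z. c a *\<^sub>R rw a)"
proof -
  from y obtain u where "y = (\<Sum>v\<in>rw ` Z. u v *\<^sub>R v)"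
    using span_finite[of "rw ` Z"] fin by auto
  then have "y = (\<Sum>a\<in>Z. u (rw a) *\<^sub>R rw a)"
    using sum.reindex[OF rows_indep_inj[OF ind fin], of "\<lambda>v. u v *\<^sub>R v"] by simp
  then show ?thesis by (rule that)
qed

lemma inner_matrix_comb:
  fixes G :: "real^'n^'n"
  shows "x \<bullet> (G *v (\<Sum>a\<in>Z. c a *\<^sub>R rw a)) = (\<Sum>a\<in>Z. (x \<bullet> (G *v rw a)) * c a)"
  by (simp add: vec.sum matrix_vector_mult_scaleR inner_sum_right mult.commute)

text \<open>For positive definite G and independent rows, the Gram matrix has trivial
  kernel: the coefficients c give the vector y = U^t c with y . G y = c . K c.\<close>

lemma gram_kernel_trivial:
  assumes ind: "rows_indep rw Z" and pd: "pos_def G"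
    and zero: "\<forall>x\<in>Z. (\<Sum>a\<in>Z. gram G rw x a * c a) = 0" and a: "a \<in> Z"
  shows "c a = 0"
proof -
  let ?y = "\<Sum>a\<in>Z. c a *\<^sub>R rw a"
  have "?y \<bullet> (G *v ?y) = (\<Sum>b\<in>Z. c b * (rw b \<bullet> (G *v ?y)))"
    by (simp only: inner_sum_left inner_scaleR_left)
  also have "\<dots> = 0"
    using zero by (simp add: inner_matrix_comb gram_def)
  finally have "?y = 0" using pd unfolding pos_def_def by force
  then show ?thesis using rows_indepD[OF ind _ a] by blast
qed

text \<open>The map T y = U^t U G y is injective on the row space W (a kernel vector y of
  T satisfies y . G y = 0) and maps W into itself, so by a dimension count it is
  onto W.\<close>

lemma row_space_map_onto:
  fixes G :: "real^'n^'n" and rw :: "nat + nat \<Rightarrow> real^'n"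
  assumes ind: "rows_indep rw Z" and fin: "finite Z" and pd: "pos_def G"
  defines "T \<equiv> \<lambda>y. \<Sum>a\<in>Z. (rw a \<bullet> (G *v y)) *\<^sub>R rw a"
  shows "T ` span (rw ` Z) = span (rw ` Z)"
proof -
  define W where "W = span (rw ` Z)"
  have linT: "linear T"
    by (rule linearI) (simp_all add: T_def matrix_vector_right_distrib inner_add_right
       scaleR_add_left sum.distrib matrix_vector_mult_scaleR scaleR_sum_right)
  have "T y \<in> W" for y unfolding T_def W_def
    by (intro span_sum span_scale span_base) auto
  then have TW: "T ` W \<subseteq> W" by auto
  have T0: "y = 0" if "y \<in> W" and "T y = 0" for y
  proof -
    have "\<forall>a\<in>Z. rw a \<bullet> (G *v y) = 0"
      using \<open>T y = 0\<close> rows_indepD[OF ind, of "\<lambda>a. rw a \<bullet> (G *v y)"] unfolding T_def by blast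
    moreover obtain c where "y = (\<Sum>a\<in>Z. c a *\<^sub>R rw a)"
      using span_rows[OF ind fin] \<open>y \<in> W\<close> unfolding W_def by blast
    ultimately have "y \<bullet> (G *v y) = 0" by (simp add: inner_sum_left)
    then show "y = 0" using pd unfolding pos_def_def by force
  qed
  have injT: "inj_on T W"
  proof (rule inj_onI)
    fix x y assume "x \<in> W" "y \<in> W" "T x = T y"
    then have "T (x - y) = 0" "x - y \<in> W"
      by (auto simp: linear_diff[OF linT] W_def intro: span_diff)
    then have "x - y = 0" using T0 by blast
    then show "x = y" by simp
  qed
  have "T ` W = W"
  proof (rule subspace_dim_equal)
    show "subspace (T ` W)" "subspace W"
      using linear_subspace_image[OF linT] by (auto simp: W_def)
    have "dim (T ` W) = dim W"
      using dim_image_eq[OF linT, of W] injT unfolding W_def by (simp add: span_span dim_span)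
    then show "dim W \<le> dim (T ` W)" by simp
  qed (use TW in auto)
  then show ?thesis unfolding W_def .
qed

text \<open>Hence the Gram matrix is onto: solving T y = rw b in the row space gives the
  b-th column of its inverse.\<close>

lemma gram_columns_solvable:
  assumes ind: "rows_indep rw Z" and fin: "finite Z" and pd: "pos_def G" and b: "b \<in> Z"
  obtains m where "\<forall>x\<in>Z. (\<Sum>a\<in>Z. gram G rw x a * m a) = (if x = b then 1 else 0)"
proof -
  obtain y where y: "y \<in> span (rw ` Z)" "(\<Sum>a\<in>Z. (rw a \<bullet> (G *v y)) *\<^sub>R rw a) = rw b"
    using row_space_map_onto[OF ind fin pd] b span_base[of "rw b" "rw ` Z"] by force
  obtain c where c: "y = (\<Sum>a\<in>Z. c a *\<^sub>R rw a)"
    using span_rows[OF ind fin y(1)] by blast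
  have "(\<Sum>a\<in>Z. (if a = b then 1 else 0) *\<^sub>R rw a) = rw b"
    using b fin by (simp add: if_distrib[of "\<lambda>t. t *\<^sub>R _"] sum.delta cong: if_cong)
  then have "(\<Sum>a\<in>Z. (rw a \<bullet> (G *v y) - (if a = b then 1 else 0)) *\<^sub>R rw a) = 0"
    using y(2) unfolding scaleR_diff_left sum_subtractf by simp
  then have "\<forall>x\<in>Z. rw x \<bullet> (G *v y) = (if x = b then 1 else 0)"
    using rows_indepD[OF ind] by fastforce
  then show ?thesis
    using c by (intro that[of c]) (simp add: inner_matrix_comb gram_def)
qed

lemma set_mat_inv_gram:
  assumes ind: "rows_indep rw Z" and fin: "finite Z" and pd: "pos_def G"
  shows "\<forall>a\<in>Z. \<forall>b\<in>Z. (\<Sum>c\<in>Z. gram G rw a c * set_mat_inv Z (gram G rw) c b) = (if a = b then 1 else 0)"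
proof -
  let ?K = "gram G rw"
  let ?P = "\<lambda>M'. (\<forall>a\<in>Z. \<forall>b\<in>Z. (\<Sum>c\<in>Z. ?K a c * M' c b) = (if a = b then 1 else 0))
                  \<and> (\<forall>a b. a \<notin> Z \<or> b \<notin> Z \<longrightarrow> M' a b = 0)"
  have uniq: "M1 = M2" if "?P M1" "?P M2" for M1 M2
  proof (intro ext)
    fix a b
    show "M1 a b = M2 a b"
    proof (cases "a \<in> Z \<and> b \<in> Z")
      case True
      have "\<forall>x\<in>Z. (\<Sum>c\<in>Z. ?K x c * (M1 c b - M2 c b)) = 0"
        using that True by (simp add: right_diff_distrib sum_subtractf)
      then show ?thesis using gram_kernel_trivial[OF ind pd, of "\<lambda>c. M1 c b - M2 c b"] True by auto
    qed (use that in auto)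
  qed
  have "\<exists>m. \<forall>x\<in>Z. (\<Sum>a\<in>Z. ?K x a * m a) = (if x = b then 1 else 0)" if "b \<in> Z" for b
    using gram_columns_solvable[OF ind fin pd that] by blast
  then obtain m where m: "\<forall>b\<in>Z. \<forall>x\<in>Z. (\<Sum>a\<in>Z. ?K x a * m b a) = (if x = b then 1 else 0)"
    by metis
  have ex: "?P (\<lambda>a b. if a \<in> Z \<and> b \<in> Z then m b a else 0)"
  proof (intro conjI ballI allI impI)
    fix a b assume "a \<in> Z" "b \<in> Z"
    then show "(\<Sum>c\<in>Z. ?K a c * (if c \<in> Z \<and> b \<in> Z then m b c else 0)) = (if a = b then 1 else 0)"
      using m by (auto intro: sum.cong)
  qed auto
  have "?P (set_mat_inv Z ?K)" unfolding set_mat_inv_def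
    by (rule theI[of ?P, OF ex]) (erule uniq[OF _ ex])
  then show ?thesis by blast
qed

lemma pos_def_matrix_inv:
  assumes pd: "pos_def G"
  shows "G ** matrix_inv G = mat 1" and "pos_def (matrix_inv G)"
proof -
  have "inj ((*v) G)"
  proof (rule injI)
    fix a b assume "G *v a = G *v b"
    then have "G *v (a - b) = 0" by (simp add: matrix_vector_mult_diff_distrib)
    then show "a = b" using pd unfolding pos_def_def by (metis inner_zero_right less_irrefl right_minus_eq)
  qed
  then have "invertible G" using matrix_left_invertible_injective invertible_left_inverse by blast
  then have "\<exists>A'. G ** A' = mat 1 \<and> A' ** G = mat 1" unfolding invertible_def .
  from someI_ex[OF this] show GGi: "G ** matrix_inv G = mat 1"
    unfolding matrix_inv_def by auto
  have GGi_v: "G *v (matrix_inv G *v y) = y" for y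
    by (simp add: matrix_vector_mul_assoc GGi)
  show "pos_def (matrix_inv G)" unfolding pos_def_def
  proof (intro allI impI)
    fix y :: "real^'a" assume "y \<noteq> 0"
    then have "matrix_inv G *v y \<noteq> 0" using GGi_v[of y] by (metis matrix_vector_mult_0_right)
    then have "0 < (matrix_inv G *v y) \<bullet> (G *v (matrix_inv G *v y))"
      using pd unfolding pos_def_def by blast
    then show "0 < y \<bullet> (matrix_inv G *v y)" by (simp add: GGi_v inner_commute)
  qed
qed

lemma Pmat_mult_vector:
  fixes Hm :: "real^'n^'n" and rw :: "nat + nat \<Rightarrow> real^'n" and Z :: "(nat + nat) set"
  defines "Hi \<equiv> matrix_inv Hm" and "Ki \<equiv> set_mat_inv Z (gram (matrix_inv Hm) rw)"
  shows "Pmat Hm rw Z *v u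
       = Hi *v u - (\<Sum>a\<in>Z. (\<Sum>b\<in>Z. Ki a b * (rw b \<bullet> (Hi *v u))) *\<^sub>R (Hi *v rw a))"
proof -
  define C where "C = (\<chi> i j. \<Sum>a\<in>Z. \<Sum>b\<in>Z. (Hi *v rw a) $ i * Ki a b * (rw b v* Hi) $ j)"
  have K: "(\<lambda>a b. rw a \<bullet> (Hi *v rw b)) = gram Hi rw" by (simp add: fun_eq_iff gram_def)
  have \<beta>: "rw b \<bullet> (Hi *v u) = (\<Sum>j\<in>UNIV. (rw b v* Hi) $ j * u $ j)" for b
    unfolding dot_lmul_matrix[symmetric] by (simp add: inner_vec_def)
  have "C *v u = (\<Sum>a\<in>Z. (\<Sum>b\<in>Z. Ki a b * (rw b \<bullet> (Hi *v u))) *\<^sub>R (Hi *v rw a))"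
    unfolding vec_eq_iff
  proof
    fix i
    have "(C *v u) $ i = (\<Sum>j\<in>UNIV. \<Sum>a\<in>Z. \<Sum>b\<in>Z. (Hi *v rw a) $ i * Ki a b * ((rw b v* Hi) $ j * u $ j))"
      by (simp add: C_def matrix_vector_mult_def sum_distrib_right mult.assoc)
    also have "\<dots> = (\<Sum>a\<in>Z. \<Sum>b\<in>Z. \<Sum>j\<in>UNIV. (Hi *v rw a) $ i * Ki a b * ((rw b v* Hi) $ j * u $ j))"
      by (subst sum.swap) (rule sum.cong[OF refl], rule sum.swap)
    also have "\<dots> = (\<Sum>a\<in>Z. (\<Sum>b\<in>Z. Ki a b * (rw b \<bullet> (Hi *v u))) * (Hi *v rw a) $ i)"
      by (simp add: \<beta> sum_distrib_left sum_distrib_right mult_ac)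
    finally show "(C *v u) $ i = (\<Sum>a\<in>Z. (\<Sum>b\<in>Z. Ki a b * (rw b \<bullet> (Hi *v u))) *\<^sub>R (Hi *v rw a)) $ i"
      by (simp add: sum_component)
  qed
  then show ?thesis
    unfolding Pmat_def Let_def Hi_def[symmetric] K Ki_def[folded Hi_def, symmetric] C_def[symmetric]
    by (simp add: matrix_vector_mult_diff_rdistrib)
qed

text \<open>The characterisation of q = -P u used in the proof: q is tangent to the
  active constraints and H q + u is orthogonal to all tangent directions; in other
  words (q, K^-1 U H^-1 u) solves the KKT system of the block matrix [H U^t; U 0].\<close>

lemma Pmat_kernel_char:
  fixes Hm :: "real^'n^'n" and rw :: "nat + nat \<Rightarrow> real^'n" and u :: "real^'n"
  assumes pd: "pos_def Hm" and ind: "rows_indep rw Z" and fin: "finite Z"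
  defines "q \<equiv> - (Pmat Hm rw Z *v u)"
  shows "q \<in> row_kernel rw Z" and "\<forall>z\<in>row_kernel rw Z. (Hm *v q + u) \<bullet> z = 0"
proof -
  define Hi where "Hi = matrix_inv Hm"
  define Ki where "Ki = set_mat_inv Z (gram Hi rw)"
  define \<beta> where "\<beta> = (\<lambda>b. rw b \<bullet> (Hi *v u))"
  define \<mu> where "\<mu> = (\<lambda>a. \<Sum>b\<in>Z. Ki a b * \<beta> b)"
  have HHi: "Hm *v (Hi *v y) = y" for y
    using pos_def_matrix_inv(1)[OF pd] by (simp add: Hi_def matrix_vector_mul_assoc)
  have rinv: "\<forall>a\<in>Z. \<forall>b\<in>Z. (\<Sum>c\<in>Z. gram Hi rw a c * Ki c b) = (if a = b then 1 else 0)"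
    using set_mat_inv_gram[OF ind fin pos_def_matrix_inv(2)[OF pd]] unfolding Hi_def Ki_def .
  have q: "q = (\<Sum>a\<in>Z. \<mu> a *\<^sub>R (Hi *v rw a)) - Hi *v u"
    unfolding q_def Pmat_mult_vector \<mu>_def \<beta>_def Hi_def Ki_def by simp
  have Hq: "Hm *v q = (\<Sum>a\<in>Z. \<mu> a *\<^sub>R rw a) - u"
    unfolding q by (simp add: matrix_vector_mult_diff_distrib vec.sum matrix_vector_mult_scaleR HHi)
  show "\<forall>z\<in>row_kernel rw Z. (Hm *v q + u) \<bullet> z = 0"
    unfolding Hq by (simp add: inner_sum_left row_kernel_def)
  have "rw c \<bullet> q = 0" if c: "c \<in> Z" for c
  proof -
    have "rw c \<bullet> q = (\<Sum>a\<in>Z. \<mu> a * gram Hi rw c a) - \<beta> c"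
      unfolding q by (simp add: inner_diff_right inner_sum_right gram_def \<beta>_def)
    also have "(\<Sum>a\<in>Z. \<mu> a * gram Hi rw c a) = (\<Sum>b\<in>Z. (\<Sum>a\<in>Z. gram Hi rw c a * Ki a b) * \<beta> b)"
      unfolding \<mu>_def by (simp add: sum_distrib_left sum_distrib_right mult_ac) (rule sum.swap)
    also have "\<dots> = (\<Sum>b\<in>Z. (if c = b then \<beta> b else 0))"
      using rinv c by (intro sum.cong) auto
    also have "\<dots> = \<beta> c" using c fin by (simp add: sum.delta)
    finally show ?thesis by simp
  qed
  then show "q \<in> row_kernel rw Z" by (simp add: row_kernel_def)
qed

section \<open>Differentiability of a stationary path\<close>

text \<open>A positive definite matrix is coercive: its quadratic form is bounded below
  by a positive multiple of the squared norm (minimum over the unit sphere).\<close>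

lemma pos_def_coercive:
  fixes G :: "real^'n^'n"
  assumes pd: "pos_def G"
  obtains c where "c > 0" and "\<forall>h. c * (norm h)^2 \<le> h \<bullet> (G *v h)"
proof -
  let ?S = "sphere (0::real^'n) 1"
  have cont: "continuous_on ?S (\<lambda>h. h \<bullet> (G *v h))"
    by (intro continuous_intros continuous_on_id linear_continuous_on matrix_vector_mul_bounded_linear)
  obtain m where m: "m \<in> ?S" "\<forall>y\<in>?S. m \<bullet> (G *v m) \<le> y \<bullet> (G *v y)"
    using continuous_attains_inf[OF compact_sphere _ cont] by (fastforce simp: sphere_eq_empty)
  show ?thesis
  proof (rule that[of "m \<bullet> (G *v m)"])
    have "m \<noteq> 0" using m(1) by auto
    then show "0 < m \<bullet> (G *v m)" using pd unfolding pos_def_def by blast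
    show "\<forall>h. m \<bullet> (G *v m) * (norm h)^2 \<le> h \<bullet> (G *v h)"
    proof
      fix h :: "real^'n"
      show "m \<bullet> (G *v m) * (norm h)^2 \<le> h \<bullet> (G *v h)"
      proof (cases "h = 0")
        case False
        let ?h = "(1 / norm h) *\<^sub>R h"
        have "?h \<in> ?S" using False by simp
        then have "m \<bullet> (G *v m) \<le> ?h \<bullet> (G *v ?h)" using m(2) by blast
        also have "?h \<bullet> (G *v ?h) = (h \<bullet> (G *v h)) / (norm h)^2"
          by (simp add: matrix_vector_mult_scaleR power2_eq_square)
        finally show ?thesis using False by (simp add: le_divide_eq)
      qed simp
    qed
  qed
qed

lemma deviation_bound:
  fixes L g :: "'a::real_inner \<Rightarrow> 'a"
  assumes lin: "linear L" and N: "subspace N"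
    and c: "c > 0" and coercive: "\<forall>h. c * (norm h)^2 \<le> h \<bullet> L h"
    and dN: "y - x \<in> N" and qN: "q \<in> N"
    and stat_y: "\<forall>z\<in>N. (g y + t *\<^sub>R u) \<bullet> z = 0"
    and stat_x: "\<forall>z\<in>N. (g x + \<rho> *\<^sub>R u) \<bullet> z = 0"
    and lin_eq: "\<forall>z\<in>N. (L q + u) \<bullet> z = 0"
  shows "c * norm (y - x - (t - \<rho>) *\<^sub>R q) \<le> norm (g y - g x - L (y - x))"
proof -
  define zz where "zz = y - x - (t - \<rho>) *\<^sub>R q"
  define R where "R = g y - g x - L (y - x)"
  have zzN: "zz \<in> N"
    unfolding zz_def using N dN qN by (simp add: subspace_diff subspace_scale)
  have "L zz = L (y - x) - (t - \<rho>) *\<^sub>R L q"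
    by (simp add: zz_def linear_diff[OF lin] linear_scale[OF lin])
  also have "\<dots> = (g y + t *\<^sub>R u) - (g x + \<rho> *\<^sub>R u) - R - (t - \<rho>) *\<^sub>R (L q + u)"
    by (simp add: R_def algebra_simps)
  finally have "zz \<bullet> L zz = - (R \<bullet> zz)"
    using stat_y stat_x lin_eq zzN by (simp add: inner_diff_right inner_commute[of zz])
  also have "\<dots> \<le> norm R * norm zz"
    using norm_cauchy_schwarz[of "- R" zz] by simp
  finally have "c * norm zz * norm zz \<le> norm R * norm zz"
    using coercive[rule_format, of zz] by (simp add: power2_eq_square mult.assoc)
  then have "c * norm zz \<le> norm R"
    by (cases "zz = 0") (simp_all add: mult_le_cancel_right_pos)
  then show ?thesis unfolding zz_def R_def .
qed

text \<open>If the deviation of a continuous path from the line through q is bounded by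
  the linearisation error of a function g differentiable at the base point, then
  the path is differentiable there with derivative q: the error is o(|x(t) - x|),
  which the bound turns into o(|t - rho|).\<close>

lemma has_vector_derivative_of_deviation_bound:
  fixes xr :: "real \<Rightarrow> 'a::real_normed_vector" and g :: "'a \<Rightarrow> 'b::real_normed_vector"
  assumes g: "(g has_derivative L) (at (xr \<rho>))" and cont: "isCont xr \<rho>" and c: "c > 0"
    and bound: "\<forall>\<^sub>F t in nhds \<rho>.
      c * norm (xr t - xr \<rho> - (t - \<rho>) *\<^sub>R q) \<le> norm (g (xr t) - g (xr \<rho>) - L (xr t - xr \<rho>))"
  shows "(xr has_vector_derivative q) (at \<rho>)"
  unfolding has_vector_derivative_def has_derivative_at_alt
proof (intro conjI allI impI bounded_linear_scaleR_left)
  fix \<epsilon> :: real assume \<epsilon>: "\<epsilon> > 0"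
  define \<eta> where "\<eta> = c / 2 * min 1 (\<epsilon> / (norm q + 1))"
  have nq: "norm q + 1 > 0" by (simp add: add_nonneg_pos)
  have \<eta>: "\<eta> > 0" "\<eta> \<le> c / 2"
    using c \<epsilon> nq by (auto simp: \<eta>_def mult_left_le)
  have "\<eta> * norm q \<le> c / 2 * (\<epsilon> / (norm q + 1) * norm q)"
    unfolding \<eta>_def mult.assoc using c by (intro mult_left_mono mult_right_mono) auto
  also have "\<dots> \<le> c / 2 * \<epsilon>"
    using c \<epsilon> nq by (intro mult_left_mono) (auto simp: field_simps)
  finally have \<eta>q: "\<eta> * norm q \<le> c / 2 * \<epsilon>" .
  obtain \<delta>1 where \<delta>1: "\<delta>1 > 0" "\<forall>y. norm (y - xr \<rho>) < \<delta>1 \<longrightarrow>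
      norm (g y - g (xr \<rho>) - L (y - xr \<rho>)) \<le> \<eta> * norm (y - xr \<rho>)"
    using g \<eta>(1) unfolding has_derivative_at_alt by blast
  obtain \<delta>2 where \<delta>2: "\<delta>2 > 0" "\<forall>t. dist t \<rho> < \<delta>2 \<longrightarrow> dist (xr t) (xr \<rho>) < \<delta>1"
    using cont \<delta>1(1) unfolding continuous_at_eps_delta by blast
  obtain \<delta>3 where \<delta>3: "\<delta>3 > 0" "\<forall>t. dist t \<rho> < \<delta>3 \<longrightarrow>
      c * norm (xr t - xr \<rho> - (t - \<rho>) *\<^sub>R q) \<le> norm (g (xr t) - g (xr \<rho>) - L (xr t - xr \<rho>))"
    using bound unfolding eventually_nhds_metric by blast
  show "\<exists>\<delta>>0. \<forall>t. norm (t - \<rho>) < \<delta> \<longrightarrow> norm (xr t - xr \<rho> - (t - \<rho>) *\<^sub>R q) \<le> \<epsilon> * norm (t - \<rho>)"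
  proof (intro exI[of _ "min \<delta>2 \<delta>3"] conjI allI impI)
    show "min \<delta>2 \<delta>3 > 0" using \<delta>2 \<delta>3 by simp
    fix t assume "norm (t - \<rho>) < min \<delta>2 \<delta>3"
    then have t2: "dist t \<rho> < \<delta>2" and t3: "dist t \<rho> < \<delta>3" by (auto simp: dist_norm)
    define zz where "zz = xr t - xr \<rho> - (t - \<rho>) *\<^sub>R q"
    have "c * norm zz \<le> \<eta> * norm (xr t - xr \<rho>)"
      using \<delta>3(2) t3 \<delta>1(2) \<delta>2(2) t2 unfolding zz_def dist_norm by (meson order_trans)
    also have "\<dots> \<le> \<eta> * norm zz + \<eta> * (\<bar>t - \<rho>\<bar> * norm q)"
      using norm_triangle_ineq[of zz "(t - \<rho>) *\<^sub>R q"] \<eta>(1)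
      by (simp add: zz_def distrib_left[symmetric] mult_left_mono)
    also have "\<dots> \<le> c / 2 * norm zz + \<bar>t - \<rho>\<bar> * (c / 2 * \<epsilon>)"
    proof (rule add_mono)
      show "\<eta> * norm zz \<le> c / 2 * norm zz" using \<eta>(2) by (rule mult_right_mono) simp
      show "\<eta> * (\<bar>t - \<rho>\<bar> * norm q) \<le> \<bar>t - \<rho>\<bar> * (c / 2 * \<epsilon>)"
        using mult_left_mono[OF \<eta>q abs_ge_zero[of "t - \<rho>"]] by (simp add: mult_ac)
    qed
    finally have "c / 2 * norm zz \<le> c / 2 * (\<epsilon> * \<bar>t - \<rho>\<bar>)" by (simp add: algebra_simps)
    then show "norm (xr t - xr \<rho> - (t - \<rho>) *\<^sub>R q) \<le> \<epsilon> * norm (t - \<rho>)"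
      using c unfolding zz_def by simp
  qed
qed

theorem proposition1:
  fixes f :: "real^'n \<Rightarrow> real"
    and grad :: "real^'n \<Rightarrow> real^'n"
    and H :: "real^'n \<Rightarrow> real^'n^'n"
    and v w :: "nat \<Rightarrow> real^'n"
    and d e :: "nat \<Rightarrow> real"
    and r s :: nat
    and I :: "real set"
    and xr :: "real \<Rightarrow> real^'n"
  assumes convex: "convex_on UNIV f"
    and grad: "\<forall>x. (f has_derivative (\<lambda>h. grad x \<bullet> h)) (at x)"
    and hess: "\<forall>x. (grad has_derivative (\<lambda>h. H x *v h)) (at x)"
    and hess_cont: "continuous_on UNIV H"
    and posdef: "\<forall>x h. h \<noteq> 0 \<longrightarrow> 0 < h \<bullet> (H x *v h)"
    and I_open: "open I" and I_interval: "is_interval I" and I_pos: "I \<subseteq> {0<..}"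
    and minimizer: "\<forall>\<rho>\<in>I. \<forall>y. penE f v d r w e s \<rho> (xr \<rho>) \<le> penE f v d r w e s \<rho> y"
    and cont: "continuous_on I xr"
    and const_sets: "\<forall>\<rho>\<in>I. \<forall>\<rho>'\<in>I.
          NE v d r (xr \<rho>) = NE v d r (xr \<rho>') \<and> ZE v d r (xr \<rho>) = ZE v d r (xr \<rho>') \<and>
          PE v d r (xr \<rho>) = PE v d r (xr \<rho>') \<and> NI w e s (xr \<rho>) = NI w e s (xr \<rho>') \<and>
          ZI w e s (xr \<rho>) = ZI w e s (xr \<rho>') \<and> PI w e s (xr \<rho>) = PI w e s (xr \<rho>')"
    and indep: "\<forall>\<rho>\<in>I. rows_indep (Zrow v w) (Zset v d r w e s (xr \<rho>))"
  shows "\<forall>\<rho>\<in>I. (xr has_vector_derivative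
            (- (Pmat (H (xr \<rho>)) (Zrow v w) (Zset v d r w e s (xr \<rho>)) *v ubar v d r w e s (xr \<rho>))))
            (at \<rho>)"
proof
  fix \<rho> assume \<rho>: "\<rho> \<in> I"
  define x where "x = xr \<rho>"
  define N where "N = row_kernel (Zrow v w) (Zset v d r w e s x)"
  define u where "u = ubar v d r w e s x"
  define q where "q = - (Pmat (H x) (Zrow v w) (Zset v d r w e s x) *v u)"
  have pd: "pos_def (H x)" using posdef by (simp add: pos_def_def)
  have fin: "finite (Zset v d r w e s x)" by (simp add: Zset_def ZE_def ZI_def)
  have qN: "q \<in> N" and q_eq: "\<forall>z\<in>N. (H x *v q + u) \<bullet> z = 0"
    using Pmat_kernel_char[OF pd indep[rule_format, OF \<rho>, folded x_def] fin, of u]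
    unfolding N_def q_def by auto
  obtain c where c: "c > 0" "\<forall>h. c * (norm h)^2 \<le> h \<bullet> (H x *v h)"
    using pos_def_coercive[OF pd] by blast
  text \<open>Along I the active sets, hence N and u, do not change; so every x(t) is
    stationary with respect to the same data, and x(t) - x lies in N.\<close>
  have same: "ZE v d r (xr t) = ZE v d r x" "ZI w e s (xr t) = ZI w e s x"
      "Zset v d r w e s (xr t) = Zset v d r w e s x" "ubar v d r w e s (xr t) = u"
    if "t \<in> I" for t
    using const_sets \<rho> that unfolding x_def u_def ubar_def Zset_def by metis+
  have stat: "\<forall>z\<in>N. (grad (xr t) + t *\<^sub>R u) \<bullet> z = 0" if t: "t \<in> I" for t
    using penalty_stationarity[OF grad[rule_format] bspec[OF minimizer t]] same[OF t]
    unfolding N_def by simp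
  have "c * norm (xr t - x - (t - \<rho>) *\<^sub>R q) \<le> norm (grad (xr t) - grad x - H x *v (xr t - x))"
    if t: "t \<in> I" for t
  proof (rule deviation_bound[where N = N and u = u])
    show "xr t - x \<in> N" unfolding N_def by (rule diff_in_row_kernel[OF same(1,2)[OF t]])
  qed (use c qN q_eq stat[OF t] stat[OF \<rho>] in \<open>auto simp: N_def x_def subspace_row_kernel matrix_vector_mul_linear\<close>)
  then have bound: "\<forall>\<^sub>F t in nhds \<rho>. c * norm (xr t - xr \<rho> - (t - \<rho>) *\<^sub>R q)
      \<le> norm (grad (xr t) - grad (xr \<rho>) - H x *v (xr t - xr \<rho>))"
    using eventually_nhds_in_open[OF I_open \<rho>] unfolding x_def by (auto elim: eventually_mono)
  have "isCont xr \<rho>"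
    using cont I_open \<rho> continuous_on_eq_continuous_at by blast
  moreover have "(grad has_derivative (\<lambda>h. H x *v h)) (at (xr \<rho>))"
    using hess unfolding x_def by blast
  ultimately show "(xr has_vector_derivative q) (at \<rho>)"
    using has_vector_derivative_of_deviation_bound[OF _ _ c(1) bound] by blast
qed

end
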